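(* There is an absolute constant $C>0$ such that the following holds. Let $A$ be an $n\times n$ random matrix with i.i.d. entries $A_{ij}$ satisfying $\mathbb{E}A_{ij}=0$, $\mathbb{E}A_{ij}^2\le1$ and $|A_{ij}|\le \sqrt n/2$ almost surely. Let $\varepsilon\in(0,1/2]$. Then with probability at least $1-\exp(-\varepsilon n)$ there exists $J\subset[n]$ with $|J|\le\varepsilon n$ such that $$\|A_{J^c}\|_{2\to\infty}\le C\sqrt{\ln(\varepsilon^{-1})}\,\sqrt n.$$
   Context: For an $n\times n$ matrix $B$ and a set $S\subset[n]$ of column indices, $B_S$ denotes the matrix obtained from $B$ by replacing by zero all entries in the columns with indices not in $S$ (so $B_{J^c}$ is $B$ with the columns indexed by $J$ zeroed out). $\|B\|_{2\to\infty}=\max_{x\neq0}\|Bx\|_\infty/\|x\|_2$, which equals the maximum Euclidean norm of a row of $B$. *)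

theory Defs
  imports "HOL-Probability.Probability"
begin

text \<open>An n x n real matrix is represented as a function on index pairs (i,j), i,j < n
  (indices [n] = {0..<n}).  B_S zeroes out all columns with index not in S.\<close>
definition col_restrict :: "nat set \<Rightarrow> (nat \<times> nat \<Rightarrow> real) \<Rightarrow> (nat \<times> nat \<Rightarrow> real)" where
  "col_restrict S B = (\<lambda>(i,j). if j \<in> S then B (i,j) else 0)"

text \<open>The 2-to-infinity norm of an n x n matrix: the maximum Euclidean norm of a row
  (inserting 0 only matters for n = 0, since row norms are nonnegative).\<close>
definition norm_2inf :: "nat \<Rightarrow> (nat \<times> nat \<Rightarrow> real) \<Rightarrow> real" where
  "norm_2inf n B = Max (insert 0 ((\<lambda>i. sqrt (\<Sum>j<n. (B (i,j))\<^sup>2)) ` {..<n}))"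

end

theory Submission
  imports Defs
begin

text \<open>Split the entries by size into dyadic shells \<open>c/2^(k+1) < x\<^sup>2 \<le> c/2^k\<close>, \<open>c = n/4\<close>;
  by the second moment bound, shell \<open>k\<close> has probability \<open>p\<^sub>k\<close> with \<open>\<Sum>\<^sub>k c p\<^sub>k / 2^(k+1) \<le> 1\<close>.
  Choose thresholds \<open>M\<^sub>k\<close> growing geometrically in \<open>k\<close> and large compared with \<open>n p\<^sub>k\<close>, and
  remove every column carrying an entry of shell \<open>k\<close> in a row that has at least \<open>M\<^sub>k\<close>
  entries in shell \<open>k\<close>. What remains of a row has squared norm at most
  \<open>n + \<Sum>\<^sub>k (M\<^sub>k - 1) c/2^k = O(n ln(1/\<epsilon>))\<close>. More than \<open>\<epsilon>n\<close> columns are removed only if some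
  pattern of such heavy (row, shell) column sets of total size \<open>> \<epsilon>n\<close> occurs; by independence
  each pattern has probability \<open>\<Prod> p\<^sub>k^|g(i,k)|\<close>, and an exponential tilt bounds the sum over all
  patterns by \<open>exp(-\<epsilon>n)\<close>.\<close>

lemma sum_Pow_power_card:
  fixes z :: "'a::comm_semiring_1"
  assumes "finite A"
  shows "(\<Sum>S\<in>Pow A. z ^ card S) = (1 + z) ^ card A"
  using prod_add[OF assms, of "\<lambda>_. z" "\<lambda>_. 1"] by (simp add: add.commute)

lemma sum_Pow_large_card_power_le:
  fixes x :: real
  assumes A: "finite A" and x: "0 \<le> x" and M: "0 < M" and small: "real (card A) * x \<le> real M"
  shows "(\<Sum>S\<in>{S\<in>Pow A. M \<le> card S}. x ^ card S) \<le> (exp 1 * real (card A) * x / real M) ^ M"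
proof (cases "real (card A) * x = 0")
  case True
  have "x ^ card S = 0" if "S \<in> Pow A" "M \<le> card S" for S
  proof -
    have "0 < card S" using that M by linarith
    then have "A \<noteq> {}" using that by auto
    then show ?thesis using True A \<open>0 < card S\<close> by simp
  qed
  then have "(\<Sum>S\<in>{S\<in>Pow A. M \<le> card S}. x ^ card S) = 0"
    by (intro sum.neutral) auto
  then show ?thesis using M by (simp add: True mult.assoc)
next
  case False
  then have y: "0 < real (card A) * x" using x by simp
  \<comment> \<open>Chernoff's trick: each term with \<open>M \<le> |S|\<close> grows by \<open>t^(|S| - M) \<ge> 1\<close>.\<close>
  define t where "t = real M / (real (card A) * x)"
  have t1: "1 \<le> t" using small y by (simp add: t_def)
  have power_le: "x ^ card S \<le> (t * x) ^ card S / t ^ M" if "M \<le> card S" for S :: "'a set"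
  proof -
    have "t ^ M \<le> t ^ card S" using that t1 by (simp add: power_increasing)
    then have "x ^ card S * t ^ M \<le> x ^ card S * t ^ card S" using x by (simp add: mult_left_mono)
    then show ?thesis using t1 by (simp add: field_simps power_mult_distrib)
  qed
  have "(\<Sum>S\<in>{S\<in>Pow A. M \<le> card S}. x ^ card S) \<le> (\<Sum>S\<in>{S\<in>Pow A. M \<le> card S}. (t * x) ^ card S / t ^ M)"
    by (intro sum_mono power_le) simp
  also have "\<dots> \<le> (\<Sum>S\<in>Pow A. (t * x) ^ card S / t ^ M)"
    using A t1 x by (intro sum_mono2) auto
  also have "\<dots> = (1 + t * x) ^ card A / t ^ M"
    using A by (simp add: sum_divide_distrib[symmetric] sum_Pow_power_card)
  also have "\<dots> \<le> exp (t * x) ^ card A / t ^ M"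
    using t1 x by (intro divide_right_mono power_mono) (auto simp: add.commute)
  also have "exp (t * x) ^ card A = exp (real M)"
  proof -
    have "t * (real (card A) * x) = real M" using False by (simp add: t_def)
    then have "real (card A) * (t * x) = real M" by (simp add: ac_simps)
    then show ?thesis by (metis exp_of_nat_mult)
  qed
  also have "exp (real M) / t ^ M = (exp 1 * real (card A) * x / real M) ^ M"
    using y M by (simp add: t_def exp_of_nat_mult[symmetric] power_divide field_simps)
  finally show ?thesis .
qed

lemma sum_Pow_empty_or_large_card_power_le:
  fixes x :: real
  assumes A: "finite A" and x: "0 \<le> x" and M: "0 < M"
    and small: "exp 1 * (real (card A) * x) \<le> exp (-1) * real M"
  shows "(\<Sum>S\<in>Pow A. if S = {} \<or> M \<le> card S then x ^ card S else 0) \<le> 1 + exp (- real M)"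
proof -
  have ratio: "exp 1 * real (card A) * x / real M \<le> exp (-1)"
    using small M by (simp add: divide_le_eq mult.assoc)
  have "(\<Sum>S\<in>Pow A. if S = {} \<or> M \<le> card S then x ^ card S else 0)
      = (\<Sum>S\<in>{S\<in>Pow A. S = {} \<or> M \<le> card S}. x ^ card S)"
    by (rule sum.inter_filter[symmetric]) (simp add: A)
  also have "{S\<in>Pow A. S = {} \<or> M \<le> card S} = insert {} {S\<in>Pow A. M \<le> card S}"
    by auto
  also have "(\<Sum>S\<in>insert {} {S\<in>Pow A. M \<le> card S}. x ^ card S)
      = 1 + (\<Sum>S\<in>{S\<in>Pow A. M \<le> card S}. x ^ card S)"
    using A M by (subst sum.insert) auto
  also have "(\<Sum>S\<in>{S\<in>Pow A. M \<le> card S}. x ^ card S) \<le> exp (-1) ^ M"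
  proof -
    have "real (card A) * x \<le> exp 1 * (real (card A) * x)"
      using x by (simp add: mult_le_cancel_right1 not_less)
    also have "\<dots> \<le> exp (-1) * real M" by (rule small)
    also have "\<dots> \<le> real M" by (rule mult_left_le_one_le) auto
    finally have "real (card A) * x \<le> real M" .
    then have "(\<Sum>S\<in>{S\<in>Pow A. M \<le> card S}. x ^ card S) \<le> (exp 1 * real (card A) * x / real M) ^ M"
      by (rule sum_Pow_large_card_power_le[OF A x M])
    also have "\<dots> \<le> exp (-1) ^ M"
      using ratio x by (intro power_mono) auto
    finally show ?thesis .
  qed
  also have "exp (-1) ^ M = exp (- real M)"
    by (simp add: exp_of_nat_mult[symmetric])
  finally show ?thesis by simp
qed

lemma sum_exp_neg_geometric_le:
  fixes a :: real and m :: "nat \<Rightarrow> real"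
  assumes a: "2 \<le> a" and m: "\<And>k. k < N \<Longrightarrow> a * (3/2) ^ k \<le> m k"
  shows "(\<Sum>k<N. exp (- m k)) \<le> 2 * exp (- a)"
proof -
  have half: "exp (- a / 2) \<le> 1 / 2"
  proof -
    have "exp (- a / 2) \<le> exp (-1)" using a by simp
    also have "\<dots> = 1 / exp 1" by (simp add: exp_minus inverse_eq_divide)
    also have "\<dots> \<le> 1 / 2" using exp_ge_add_one_self[of 1] by (simp add: field_simps)
    finally show ?thesis .
  qed
  have "exp (- m k) \<le> exp (- a) * (1/2) ^ k" if k: "k < N" for k
  proof -
    have "a * (1 + real k / 2) \<le> a * (3/2) ^ k"
      using Bernoulli_inequality[of "1/2" k] a by (intro mult_left_mono) auto
    then have "- m k \<le> - a + real k * (- a / 2)" using m[OF k] by (simp add: algebra_simps)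
    then have "exp (- m k) \<le> exp (- a) * exp (- a / 2) ^ k"
      by (simp add: exp_add[symmetric] exp_of_nat_mult[symmetric])
    also have "\<dots> \<le> exp (- a) * (1/2) ^ k"
      using half by (intro mult_left_mono power_mono) auto
    finally show ?thesis .
  qed
  then have "(\<Sum>k<N. exp (- m k)) \<le> exp (- a) * (\<Sum>k<N. (1/2::real) ^ k)"
    by (subst sum_distrib_left) (rule sum_mono, simp)
  also have "\<dots> \<le> exp (- a) * 2"
    by (intro mult_left_mono) (simp_all add: sum_gp_strict)
  finally show ?thesis by simp
qed

definition dyadic_shell :: "real \<Rightarrow> nat \<Rightarrow> real set" where
  "dyadic_shell c k = {x. c / 2 ^ Suc k < x\<^sup>2 \<and> x\<^sup>2 \<le> c / 2 ^ k}"

lemma dyadic_shell_borel [measurable]: "dyadic_shell c k \<in> sets borel"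
  unfolding dyadic_shell_def by measurable

lemma dyadic_shell_unique:
  assumes "0 < c" "x \<in> dyadic_shell c k" "x \<in> dyadic_shell c l"
  shows "k = l"
proof (rule ccontr)
  have mono: "c / 2 ^ k' \<le> c / 2 ^ Suc k" if "k < k'" for k k'
    using assms(1) that by (intro divide_left_mono power_increasing) auto
  assume "k \<noteq> l"
  then consider "k < l" | "l < k" by linarith
  then show False
    by cases (use assms mono in \<open>fastforce simp: dyadic_shell_def\<close>)+
qed

lemma dyadic_shell_cover:
  assumes "c / 2 ^ N < x\<^sup>2" "x\<^sup>2 \<le> c"
  shows "\<exists>k<N. x \<in> dyadic_shell c k"
  using assms
proof (induction N)
  case (Suc N)
  then show ?case
    by (cases "c / 2 ^ N < x\<^sup>2") (auto simp: dyadic_shell_def intro: less_SucI)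
qed simp

lemma dyadic_shell_weights_le:
  assumes "0 < c"
  shows "(\<Sum>k<N. c / 2 ^ Suc k * indicator (dyadic_shell c k) x) \<le> x\<^sup>2"
proof (cases "\<exists>k<N. x \<in> dyadic_shell c k")
  case True
  then obtain k where k: "k < N" "x \<in> dyadic_shell c k" by auto
  have others: "c / 2 ^ Suc l * indicator (dyadic_shell c l) x = 0" if "l \<in> {..<N} - {k}" for l
    using that dyadic_shell_unique[OF assms _ k(2), of l] by (auto simp: indicator_def)
  have "(\<Sum>k<N. c / 2 ^ Suc k * indicator (dyadic_shell c k) x) = c / 2 ^ Suc k"
    using k others by (simp add: sum.remove[of "{..<N}" k] sum.neutral)
  also have "\<dots> < x\<^sup>2" using k by (simp add: dyadic_shell_def)
  finally show ?thesis by simp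
next
  case False
  then have "(\<Sum>k<N. c / 2 ^ Suc k * indicator (dyadic_shell c k) x) = 0"
    by (intro sum.neutral) (simp add: indicator_def)
  then show ?thesis by simp
qed

lemma sum_dyadic_shell_measure_le_second_moment:
  fixes \<mu> :: "real measure"
  assumes \<mu>: "prob_space \<mu>" and sb: "sets \<mu> = sets borel" and c: "0 < c"
    and int: "integrable \<mu> (\<lambda>x. x\<^sup>2)"
  shows "(\<Sum>k<N. c / 2 ^ Suc k * measure \<mu> (dyadic_shell c k)) \<le> (\<integral>x. x\<^sup>2 \<partial>\<mu>)"
proof -
  interpret prob_space \<mu> by (rule \<mu>)
  have shell: "dyadic_shell c k \<in> sets \<mu>" for k by (simp add: sb)
  have int_shell: "integrable \<mu> (\<lambda>x. c / 2 ^ Suc k * indicator (dyadic_shell c k) x)" for k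
    using shell by (intro integrable_mult_right integrable_real_indicator) (auto simp: emeasure_eq_measure)
  have "(\<Sum>k<N. c / 2 ^ Suc k * measure \<mu> (dyadic_shell c k))
      = (\<integral>x. (\<Sum>k<N. c / 2 ^ Suc k * indicator (dyadic_shell c k) x) \<partial>\<mu>)"
    using shell int_shell by (simp add: Bochner_Integration.integral_sum)
  also have "\<dots> \<le> (\<integral>x. x\<^sup>2 \<partial>\<mu>)"
    using int_shell int dyadic_shell_weights_le[OF c] by (intro integral_mono) auto
  finally show ?thesis .
qed

lemma dyadic_thresholds_exist:
  fixes q :: "nat \<Rightarrow> real" and u :: real
  assumes q: "\<And>k. 0 \<le> q k" and sum_q: "(\<Sum>k<N. q k) \<le> 1" and u: "0 \<le> u"
  obtains M :: "nat \<Rightarrow> nat" where "\<And>k. 1 \<le> M k" "\<And>k. u / 2 * (3/2) ^ k \<le> M k"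
    "\<And>k. 2 * u * 2 ^ k * q k \<le> M k" "(\<Sum>k<N. (real (M k) - 1) / 2 ^ k) \<le> 4 * u"
proof
  \<comment> \<open>The summand \<open>(3/4)^k/4\<close> enforces geometric growth at a bounded cost in \<open>\<Sum> m k / 2^k\<close>.\<close>
  define m where "m k = 2 * u * 2 ^ k * (q k + (3/4) ^ k / 4)" for k
  have m0: "0 \<le> m k" for k using q u by (simp add: m_def)
  define M where "M k = nat \<lfloor>m k\<rfloor> + 1" for k
  have m_le_M: "m k \<le> M k" and M_le_m: "real (M k) - 1 \<le> m k" for k
    using m0[of k] by (simp_all add: M_def) linarith
  show "1 \<le> M k" for k by (simp add: M_def)
  show "u / 2 * (3/2) ^ k \<le> M k" for k
  proof -
    have "u / 2 * (3/2) ^ k = 2 * u * 2 ^ k * ((3/4) ^ k / 4)"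
      by (simp add: power_mult_distrib[symmetric])
    also have "\<dots> \<le> m k" unfolding m_def using q u by (intro mult_left_mono) auto
    finally show ?thesis using m_le_M[of k] by simp
  qed
  show "2 * u * 2 ^ k * q k \<le> M k" for k
  proof -
    have "2 * u * 2 ^ k * q k \<le> m k" unfolding m_def using u by (intro mult_left_mono) auto
    then show ?thesis using m_le_M[of k] by linarith
  qed
  have geom: "(\<Sum>k<N. (3/4::real) ^ k / 4) \<le> 1"
    by (simp add: sum_divide_distrib[symmetric] sum_gp_strict)
  have "(\<Sum>k<N. (real (M k) - 1) / 2 ^ k) \<le> (\<Sum>k<N. m k / 2 ^ k)"
    using M_le_m by (intro sum_mono divide_right_mono) auto
  also have "\<dots> = 2 * u * ((\<Sum>k<N. q k) + (\<Sum>k<N. (3/4) ^ k / 4))"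
    by (simp add: m_def sum.distrib sum_distrib_left[symmetric] mult.assoc)
  also have "\<dots> \<le> 2 * u * 2"
    using sum_q geom u by (intro mult_left_mono) auto
  finally show "(\<Sum>k<N. (real (M k) - 1) / 2 ^ k) \<le> 4 * u" by simp
qed

definition heavy_patterns :: "'a set \<Rightarrow> nat \<Rightarrow> ('a \<Rightarrow> nat) \<Rightarrow> real \<Rightarrow> ('a \<Rightarrow> nat set) set" where
  "heavy_patterns K n m t = {g \<in> PiE K (\<lambda>_. Pow {..<n}).
     (\<forall>x\<in>K. g x = {} \<or> m x \<le> card (g x)) \<and> t < (\<Sum>x\<in>K. real (card (g x)))}"

lemma finite_heavy_patterns: "finite K \<Longrightarrow> finite (heavy_patterns K n m t)"
  unfolding heavy_patterns_def by (rule finite_subset[OF _ finite_PiE[of K "\<lambda>_. Pow {..<n}"]]) auto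

lemma sum_heavy_patterns_le:
  fixes p :: "'a \<Rightarrow> real" and m :: "'a \<Rightarrow> nat"
  assumes K: "finite K" and p: "\<And>x. 0 \<le> p x" and m: "\<And>x. 0 < m x"
    and sparse: "\<And>x. x \<in> K \<Longrightarrow> exp 3 * (real n * p x) \<le> exp (-1) * real (m x)"
    and tail: "(\<Sum>x\<in>K. exp (- real (m x))) \<le> t"
  shows "(\<Sum>g\<in>heavy_patterns K n m t. \<Prod>x\<in>K. p x ^ card (g x)) \<le> exp (- t)"
proof -
  \<comment> \<open>Exponential tilt: a heavy pattern has total size \<open>> t\<close>, so weighting it by
    \<open>exp (2 \<Sum>|g x|)\<close> costs at most \<open>exp (-2t)\<close>; the weighted sum over all patterns factorizes.\<close>
  define \<psi> where "\<psi> x S = (if S = {} \<or> m x \<le> card S then (exp 2 * p x) ^ card S else 0)"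
    for x and S :: "nat set"
  have \<psi>_nonneg: "0 \<le> \<psi> x S" for x S using p by (simp add: \<psi>_def)
  have tilt: "(\<Prod>x\<in>K. p x ^ card (g x)) \<le> exp (- 2 * t) * (\<Prod>x\<in>K. \<psi> x (g x))"
    if g: "g \<in> heavy_patterns K n m t" for g
  proof -
    have "(\<Prod>x\<in>K. \<psi> x (g x)) = (\<Prod>x\<in>K. exp (real (card (g x)) * 2) * p x ^ card (g x))"
      using g by (intro prod.cong) (auto simp: heavy_patterns_def \<psi>_def power_mult_distrib exp_of_nat_mult)
    also have "\<dots> = exp ((\<Sum>x\<in>K. real (card (g x))) * 2) * (\<Prod>x\<in>K. p x ^ card (g x))"
      by (simp add: prod.distrib exp_sum[OF K] sum_distrib_right)
    finally have "exp (2 * t) * (\<Prod>x\<in>K. p x ^ card (g x)) \<le> (\<Prod>x\<in>K. \<psi> x (g x))"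
      using g p by (auto simp: heavy_patterns_def intro!: mult_right_mono prod_nonneg)
    then show ?thesis by (simp add: exp_minus field_simps)
  qed
  have "(\<Sum>g\<in>heavy_patterns K n m t. \<Prod>x\<in>K. p x ^ card (g x))
      \<le> exp (- 2 * t) * (\<Sum>g\<in>heavy_patterns K n m t. \<Prod>x\<in>K. \<psi> x (g x))"
    by (subst sum_distrib_left) (rule sum_mono[OF tilt])
  also have "\<dots> \<le> exp (- 2 * t) * (\<Sum>g\<in>PiE K (\<lambda>_. Pow {..<n}). \<Prod>x\<in>K. \<psi> x (g x))"
    using K \<psi>_nonneg
    by (intro mult_left_mono sum_mono2 finite_PiE) (auto simp: heavy_patterns_def prod_nonneg)
  also have "(\<Sum>g\<in>PiE K (\<lambda>_. Pow {..<n}). \<Prod>x\<in>K. \<psi> x (g x)) = (\<Prod>x\<in>K. \<Sum>S\<in>Pow {..<n}. \<psi> x S)"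
    using K by (simp add: prod_sum_PiE)
  also have "\<dots> \<le> (\<Prod>x\<in>K. exp (exp (- real (m x))))"
  proof (rule prod_mono)
    fix x assume x: "x \<in> K"
    have "exp 1 * (real n * (exp 2 * p x)) = (exp 1 * exp 2) * (real n * p x)"
      by (simp only: mult_ac)
    also have "exp 1 * exp 2 = (exp 3 :: real)" by (simp flip: exp_add)
    finally have "exp 1 * (real (card {..<n}) * (exp 2 * p x)) \<le> exp (-1) * real (m x)"
      using sparse[OF x] by (simp only: card_lessThan)
    then have "(\<Sum>S\<in>Pow {..<n}. \<psi> x S) \<le> 1 + exp (- real (m x))"
      unfolding \<psi>_def using p m by (intro sum_Pow_empty_or_large_card_power_le) auto
    also have "\<dots> \<le> exp (exp (- real (m x)))" by (simp add: add.commute)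
    finally show "0 \<le> (\<Sum>S\<in>Pow {..<n}. \<psi> x S) \<and> (\<Sum>S\<in>Pow {..<n}. \<psi> x S) \<le> exp (exp (- real (m x)))"
      by (simp add: sum_nonneg \<psi>_nonneg)
  qed
  also have "\<dots> = exp (\<Sum>x\<in>K. exp (- real (m x)))"
    by (simp add: exp_sum K)
  also have "exp (- 2 * t) * \<dots> \<le> exp (- 2 * t) * exp t"
    using tail by simp
  also have "\<dots> = exp (- t)" by (simp add: exp_add[symmetric])
  finally show ?thesis by simp
qed

lemma product_prob_space_const: "prob_space \<mu> \<Longrightarrow> product_prob_space (\<lambda>_. \<mu>)"
  by (simp add: product_prob_space_def product_sigma_finite_def prob_space_imp_sigma_finite
      product_prob_space_axioms_def)

lemma measure_all_dyadic_shells_le: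
  fixes \<mu> :: "real measure"
  assumes \<mu>: "prob_space \<mu>" and sb: "sets \<mu> = sets borel" and c: "0 < c" and S: "finite S"
  shows "measure \<mu> {x. \<forall>k\<in>S. x \<in> dyadic_shell c k} \<le> (\<Prod>k\<in>S. measure \<mu> (dyadic_shell c k))"
proof -
  interpret prob_space \<mu> by (rule \<mu>)
  consider "S = {}" | k where "S = {k}" | k l where "k \<in> S" "l \<in> S" "k \<noteq> l"
    by (metis empty_iff insertI1 is_singletonI' is_singleton_the_elem)
  then show ?thesis
  proof cases
    case 1
    then show ?thesis using sets_eq_imp_space_eq[OF sb] prob_space by simp
  next
    case (3 k l)
    then have empty: "{x. \<forall>k\<in>S. x \<in> dyadic_shell c k} = {}"
      using dyadic_shell_unique[OF c] by blast
    show ?thesis unfolding empty by (simp add: prod_nonneg)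
  qed simp
qed

definition pattern_event :: "nat \<Rightarrow> real \<Rightarrow> nat \<Rightarrow> (nat \<times> nat \<Rightarrow> nat set) \<Rightarrow> (nat \<times> nat \<Rightarrow> real) set" where
  "pattern_event n c N g =
     {A. \<forall>(i,j)\<in>{..<n}\<times>{..<n}. \<forall>k<N. j \<in> g (i,k) \<longrightarrow> A (i,j) \<in> dyadic_shell c k}"

lemma pattern_event_eq_Collect:
  "S \<inter> pattern_event n c N g =
     {A \<in> S. \<forall>e\<in>{..<n}\<times>{..<n}. A e \<in> {x. \<forall>k<N. snd e \<in> g (fst e, k) \<longrightarrow> x \<in> dyadic_shell c k}}"
  by (auto simp: pattern_event_def)

lemma pattern_event_sets:
  assumes "sets \<mu> = sets borel"
  shows "space (PiM ({..<n}\<times>{..<n}) (\<lambda>_. \<mu>)) \<inter> pattern_event n c N g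
    \<in> sets (PiM ({..<n}\<times>{..<n}) (\<lambda>_. \<mu>))"
  unfolding pattern_event_eq_Collect using assms by measurable

lemma prod_pattern_regroup:
  fixes p :: "nat \<Rightarrow> 'a::comm_monoid_mult" and g :: "nat \<times> nat \<Rightarrow> nat set"
  assumes g: "\<And>i k. i < n \<Longrightarrow> k < N \<Longrightarrow> g (i,k) \<subseteq> {..<n}"
  shows "(\<Prod>(i,j)\<in>{..<n}\<times>{..<n}. \<Prod>k<N. if j \<in> g (i,k) then p k else 1)
    = (\<Prod>x\<in>{..<n}\<times>{..<N}. p (snd x) ^ card (g x))"
proof -
  have row: "(\<Prod>j<n. if j \<in> g (i,k) then p k else 1) = p k ^ card (g (i,k))"
    if "i < n" "k < N" for i k
  proof -
    have "(\<Prod>j<n. if j \<in> g (i,k) then p k else 1) = (\<Prod>j\<in>{j\<in>{..<n}. j \<in> g (i,k)}. p k)"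
      by (rule prod.inter_filter[symmetric]) simp
    also have "{j\<in>{..<n}. j \<in> g (i,k)} = g (i,k)" using g that by auto
    finally show ?thesis by simp
  qed
  have "(\<Prod>(i,j)\<in>{..<n}\<times>{..<n}. \<Prod>k<N. if j \<in> g (i,k) then p k else 1)
      = (\<Prod>i<n. \<Prod>j<n. \<Prod>k<N. if j \<in> g (i,k) then p k else 1)"
    by (rule prod.cartesian_product[symmetric])
  also have "\<dots> = (\<Prod>i<n. \<Prod>k<N. \<Prod>j<n. if j \<in> g (i,k) then p k else 1)"
    by (intro prod.cong refl prod.swap)
  also have "\<dots> = (\<Prod>i<n. \<Prod>k<N. p k ^ card (g (i,k)))"
    using row by (intro prod.cong refl) auto
  also have "\<dots> = (\<Prod>(i,k)\<in>{..<n}\<times>{..<N}. p k ^ card (g (i,k)))"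
    by (rule prod.cartesian_product)
  finally show ?thesis by (simp add: case_prod_beta)
qed

lemma measure_pattern_event_le:
  fixes \<mu> :: "real measure"
  assumes \<mu>: "prob_space \<mu>" and sb: "sets \<mu> = sets borel" and c: "0 < c"
    and g: "\<And>i k. i < n \<Longrightarrow> k < N \<Longrightarrow> g (i,k) \<subseteq> {..<n}"
  shows "measure (PiM ({..<n}\<times>{..<n}) (\<lambda>_. \<mu>))
      (space (PiM ({..<n}\<times>{..<n}) (\<lambda>_. \<mu>)) \<inter> pattern_event n c N g)
    \<le> (\<Prod>x\<in>{..<n}\<times>{..<N}. measure \<mu> (dyadic_shell c (snd x)) ^ card (g x))"
proof -
  let ?I = "{..<n}\<times>{..<n}"
  interpret P: product_prob_space "\<lambda>_. \<mu>" ?I by (rule product_prob_space_const[OF \<mu>])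
  let ?p = "\<lambda>k. measure \<mu> (dyadic_shell c k)"
  define X where "X e = {x. \<forall>k<N. snd e \<in> g (fst e, k) \<longrightarrow> x \<in> dyadic_shell c k}" for e
  have X: "X e \<in> sets \<mu>" for e unfolding X_def using sb by measurable
  have "measure (PiM ?I (\<lambda>_. \<mu>)) (space (PiM ?I (\<lambda>_. \<mu>)) \<inter> pattern_event n c N g)
      = (\<Prod>e\<in>?I. measure \<mu> (X e))"
    unfolding pattern_event_eq_Collect X_def[symmetric] using P.emeasure_PiM_Collect[of ?I X] X
    by (simp add: P.emeasure_eq_measure P.M.emeasure_eq_measure prod_ennreal prod_nonneg)
  also have "\<dots> \<le> (\<Prod>(i,j)\<in>?I. \<Prod>k<N. if j \<in> g (i,k) then ?p k else 1)"
  proof (rule prod_mono, safe)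
    fix i j
    have X_ij: "X (i,j) = {x. \<forall>k\<in>{k\<in>{..<N}. j \<in> g (i,k)}. x \<in> dyadic_shell c k}"
      by (auto simp: X_def)
    have "measure \<mu> (X (i,j)) \<le> (\<Prod>k\<in>{k\<in>{..<N}. j \<in> g (i,k)}. ?p k)"
      unfolding X_ij by (rule measure_all_dyadic_shells_le[OF \<mu> sb c]) simp
    also have "\<dots> = (\<Prod>k<N. if j \<in> g (i,k) then ?p k else 1)"
      by (rule prod.inter_filter) simp
    finally show "measure \<mu> (X (i,j)) \<le> (\<Prod>k<N. if j \<in> g (i,k) then ?p k else 1)" .
  qed simp
  also have "\<dots> = (\<Prod>x\<in>{..<n}\<times>{..<N}. ?p (snd x) ^ card (g x))"
    using g by (rule prod_pattern_regroup)
  finally show ?thesis .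
qed

lemma prob_heavy_pattern_events_le:
  fixes \<mu> :: "real measure" and M :: "nat \<Rightarrow> nat"
  assumes \<mu>: "prob_space \<mu>" and sb: "sets \<mu> = sets borel" and c: "0 < c" and M: "\<And>k. 0 < M k"
    and sparse: "\<And>k. k < N \<Longrightarrow> exp 3 * (real n * measure \<mu> (dyadic_shell c k)) \<le> exp (-1) * real (M k)"
    and tail: "real n * (\<Sum>k<N. exp (- real (M k))) \<le> t"
  shows "measure (PiM ({..<n}\<times>{..<n}) (\<lambda>_. \<mu>))
      (\<Union>g\<in>heavy_patterns ({..<n}\<times>{..<N}) n (\<lambda>x. M (snd x)) t.
         space (PiM ({..<n}\<times>{..<n}) (\<lambda>_. \<mu>)) \<inter> pattern_event n c N g) \<le> exp (- t)"
proof -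
  let ?P = "PiM ({..<n}\<times>{..<n}) (\<lambda>_. \<mu>)"
  let ?W = "heavy_patterns ({..<n}\<times>{..<N}) n (\<lambda>x. M (snd x)) t"
  let ?p = "\<lambda>x. measure \<mu> (dyadic_shell c (snd x))"
  have into: "g (i,k) \<subseteq> {..<n}" if "g \<in> ?W" "i < n" "k < N" for g i k
    using that by (auto simp: heavy_patterns_def PiE_iff)
  have "measure ?P (\<Union>g\<in>?W. space ?P \<inter> pattern_event n c N g)
      \<le> (\<Sum>g\<in>?W. measure ?P (space ?P \<inter> pattern_event n c N g))"
    using pattern_event_sets[OF sb] by (intro measure_UNION_le finite_heavy_patterns) auto
  also have "\<dots> \<le> (\<Sum>g\<in>?W. \<Prod>x\<in>{..<n}\<times>{..<N}. ?p x ^ card (g x))"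
    using into by (intro sum_mono measure_pattern_event_le[OF \<mu> sb c]) auto
  also have "\<dots> \<le> exp (- t)"
  proof (rule sum_heavy_patterns_le)
    have "(\<Sum>x\<in>{..<n}\<times>{..<N}. exp (- real (M (snd x)))) = (\<Sum>(i,k)\<in>{..<n}\<times>{..<N}. exp (- real (M k)))"
      by (simp add: case_prod_beta)
    also have "\<dots> = (\<Sum>i<n. \<Sum>k<N. exp (- real (M k)))"
      by (rule sum.cartesian_product[symmetric])
    finally show "(\<Sum>x\<in>{..<n}\<times>{..<N}. exp (- real (M (snd x)))) \<le> t" using tail by simp
  qed (use M sparse in auto)
  finally show ?thesis .
qed

definition shell_cols :: "nat \<Rightarrow> real \<Rightarrow> (nat \<times> nat \<Rightarrow> real) \<Rightarrow> nat \<Rightarrow> nat \<Rightarrow> nat set" where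
  "shell_cols n c A i k = {j\<in>{..<n}. A (i,j) \<in> dyadic_shell c k}"

definition heavy_shell_cols ::
    "nat \<Rightarrow> real \<Rightarrow> (nat \<Rightarrow> nat) \<Rightarrow> (nat \<times> nat \<Rightarrow> real) \<Rightarrow> nat \<times> nat \<Rightarrow> nat set" where
  "heavy_shell_cols n c M A =
     (\<lambda>(i,k). if M k \<le> card (shell_cols n c A i k) then shell_cols n c A i k else {})"

lemma row_sum_outside_heavy_le:
  assumes c: "0 \<le> c" and bnd: "\<And>j. j < n \<Longrightarrow> (A (i,j))\<^sup>2 \<le> c" and cN: "c / 2 ^ N \<le> 1"
    and M: "\<And>k. 1 \<le> M k" and J: "\<And>k. k < N \<Longrightarrow> heavy_shell_cols n c M A (i,k) \<subseteq> J"
  shows "(\<Sum>j<n. (col_restrict ({..<n} - J) A (i,j))\<^sup>2)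
    \<le> real n + (\<Sum>k<N. (real (M k) - 1) * (c / 2 ^ k))"
proof -
  define light where "light k \<longleftrightarrow> card (shell_cols n c A i k) < M k" for k
  define f where "f j k = (if light k \<and> j \<in> shell_cols n c A i k then c / 2 ^ k else 0)" for j k
  have entry: "(col_restrict ({..<n} - J) A (i,j))\<^sup>2 \<le> 1 + (\<Sum>k<N. f j k)" if j: "j < n" for j
  proof (cases "j \<notin> J \<and> 1 < (A (i,j))\<^sup>2")
    case True
    then obtain k where k: "k < N" "A (i,j) \<in> dyadic_shell c k"
      using dyadic_shell_cover[of c N "A (i,j)"] bnd[OF j] cN by auto
    have "j \<in> shell_cols n c A i k" using j k by (simp add: shell_cols_def)
    then have "light k"
      using True J[OF k(1)] unfolding light_def heavy_shell_cols_def by (auto split: if_splits)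
    then have "(A (i,j))\<^sup>2 \<le> f j k" using k j by (simp add: f_def shell_cols_def dyadic_shell_def)
    also have "\<dots> \<le> (\<Sum>k<N. f j k)" using k c by (intro member_le_sum) (auto simp: f_def)
    finally show ?thesis using j True by (simp add: col_restrict_def)
  next
    case False
    have "0 \<le> (\<Sum>k<N. f j k)" using c by (intro sum_nonneg) (simp add: f_def)
    then show ?thesis using False j by (auto simp: col_restrict_def)
  qed
  have light_sum: "(\<Sum>j<n. f j k) \<le> (real (M k) - 1) * (c / 2 ^ k)" for k
  proof (cases "light k")
    case True
    have "(\<Sum>j<n. f j k) = real (card (shell_cols n c A i k)) * (c / 2 ^ k)"
      using True by (simp add: f_def sum.If_cases shell_cols_def Int_def)
    also have "\<dots> \<le> (real (M k) - 1) * (c / 2 ^ k)"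
      using True c by (intro mult_right_mono) (auto simp: light_def)
    finally show ?thesis .
  qed (use M[of k] c in \<open>simp add: f_def\<close>)
  have "(\<Sum>j<n. (col_restrict ({..<n} - J) A (i,j))\<^sup>2) \<le> (\<Sum>j<n. 1 + (\<Sum>k<N. f j k))"
    by (intro sum_mono entry) simp
  also have "\<dots> = real n + (\<Sum>k<N. \<Sum>j<n. f j k)"
    by (simp add: sum.distrib sum.swap[of f])
  also have "\<dots> \<le> real n + (\<Sum>k<N. (real (M k) - 1) * (c / 2 ^ k))"
    using light_sum by (intro add_left_mono sum_mono) auto
  finally show ?thesis .
qed

lemma norm_2inf_le_sqrt:
  assumes "\<And>i. i < n \<Longrightarrow> (\<Sum>j<n. (B (i,j))\<^sup>2) \<le> R" and "0 \<le> R"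
  shows "norm_2inf n B \<le> sqrt R"
  unfolding norm_2inf_def using assms by (intro Max.boundedI) auto

lemma norm_2inf_col_restrict_measurable:
  assumes sb: "sets \<mu> = sets borel"
  shows "(\<lambda>A. norm_2inf n (col_restrict S A)) \<in> borel_measurable (PiM ({..<n}\<times>{..<n}) (\<lambda>_. \<mu>))"
proof -
  have Max_eq: "norm_2inf n B = Max ((\<lambda>i. if i < n then sqrt (\<Sum>j<n. (B (i,j))\<^sup>2) else 0) ` {..n})" for B
    unfolding norm_2inf_def by (rule arg_cong[where f=Max]) (force simp: image_iff)
  have "(\<lambda>A. col_restrict S A (i,j)) \<in> borel_measurable (PiM ({..<n}\<times>{..<n}) (\<lambda>_. \<mu>))"
    if "i < n" "j < n" for i j
  proof -
    have "(\<lambda>A. A (i,j)) \<in> measurable (PiM ({..<n}\<times>{..<n}) (\<lambda>_. \<mu>)) \<mu>"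
      using that by (intro measurable_component_singleton) auto
    then have "(\<lambda>A. A (i,j)) \<in> borel_measurable (PiM ({..<n}\<times>{..<n}) (\<lambda>_. \<mu>))"
      by (simp add: measurable_cong_sets[OF refl sb])
    then show ?thesis by (cases "j \<in> S") (simp_all add: col_restrict_def)
  qed
  then have "(\<lambda>A. if i < n then sqrt (\<Sum>j<n. (col_restrict S A (i,j))\<^sup>2) else 0)
      \<in> borel_measurable (PiM ({..<n}\<times>{..<n}) (\<lambda>_. \<mu>))" for i
    by (cases "i < n") simp_all
  then show ?thesis
    unfolding Max_eq by (intro borel_measurable_Max) auto
qed

lemma bounded_matrix_light_or_heavy:
  assumes c: "0 \<le> c" and bnd: "\<And>i j. i < n \<Longrightarrow> j < n \<Longrightarrow> (A (i,j))\<^sup>2 \<le> c"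
    and cN: "c / 2 ^ N \<le> 1" and M: "\<And>k. 1 \<le> M k"
  shows "(\<exists>J\<subseteq>{..<n}. real (card J) \<le> t \<and>
            norm_2inf n (col_restrict ({..<n} - J) A)
              \<le> sqrt (real n + (\<Sum>k<N. (real (M k) - 1) * (c / 2 ^ k))))
       \<or> (\<exists>g\<in>heavy_patterns ({..<n}\<times>{..<N}) n (\<lambda>x. M (snd x)) t. A \<in> pattern_event n c N g)"
proof -
  let ?K = "{..<n}\<times>{..<N}"
  define G where "G = heavy_shell_cols n c M A"
  have G_sub: "G x \<subseteq> {..<n}" for x
    by (auto simp: G_def heavy_shell_cols_def shell_cols_def split: prod.splits)
  show ?thesis
  proof (cases "(\<Sum>x\<in>?K. real (card (G x))) \<le> t")
    case True
    define J where "J = (\<Union>x\<in>?K. G x)"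
    have "real (card J) \<le> real (\<Sum>x\<in>?K. card (G x))"
      unfolding J_def by (intro of_nat_mono card_UN_le) simp
    then have "real (card J) \<le> t" using True by simp
    moreover have "norm_2inf n (col_restrict ({..<n} - J) A)
        \<le> sqrt (real n + (\<Sum>k<N. (real (M k) - 1) * (c / 2 ^ k)))"
    proof (rule norm_2inf_le_sqrt)
      show "(\<Sum>j<n. (col_restrict ({..<n} - J) A (i,j))\<^sup>2)
          \<le> real n + (\<Sum>k<N. (real (M k) - 1) * (c / 2 ^ k))" if "i < n" for i
        using that by (intro row_sum_outside_heavy_le[OF c _ cN M]) (auto simp: J_def G_def intro: bnd)
      show "0 \<le> real n + (\<Sum>k<N. (real (M k) - 1) * (c / 2 ^ k))"
        using M c by (intro add_nonneg_nonneg sum_nonneg) auto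
    qed
    moreover have "J \<subseteq> {..<n}" using G_sub by (auto simp: J_def)
    ultimately show ?thesis by blast
  next
    case False
    define g where "g = restrict G ?K"
    have "g \<in> heavy_patterns ?K n (\<lambda>x. M (snd x)) t"
      using False G_sub
      by (auto simp: heavy_patterns_def g_def G_def heavy_shell_cols_def)
    moreover have "A \<in> pattern_event n c N g"
      by (auto simp: pattern_event_def g_def G_def heavy_shell_cols_def shell_cols_def)
    ultimately show ?thesis by blast
  qed
qed

lemma column_removal_event_sets:
  assumes sb: "sets \<mu> = sets borel"
  shows "{A \<in> space (PiM ({..<n}\<times>{..<n}) (\<lambda>_. \<mu>)). \<exists>J\<subseteq>{..<n}. real (card J) \<le> t \<and>
       norm_2inf n (col_restrict ({..<n} - J) A) \<le> R} \<in> sets (PiM ({..<n}\<times>{..<n}) (\<lambda>_. \<mu>))"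
proof -
  let ?P = "PiM ({..<n}\<times>{..<n}) (\<lambda>_. \<mu>)"
  have "{A \<in> space ?P. \<exists>J\<subseteq>{..<n}. real (card J) \<le> t \<and> norm_2inf n (col_restrict ({..<n} - J) A) \<le> R}
      = (\<Union>J\<in>{J\<in>Pow {..<n}. real (card J) \<le> t}.
          {A \<in> space ?P. norm_2inf n (col_restrict ({..<n} - J) A) \<le> R})"
    by auto
  also have "\<dots> \<in> sets ?P"
  proof (intro sets.finite_UN)
    show "{A \<in> space ?P. norm_2inf n (col_restrict S A) \<le> R} \<in> sets ?P" for S
      using norm_2inf_col_restrict_measurable[OF sb] by measurable
  qed simp
  finally show ?thesis .
qed

lemma prob_column_removal_ge:
  fixes \<mu> :: "real measure" and M :: "nat \<Rightarrow> nat"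
  assumes \<mu>: "prob_space \<mu>" and sb: "sets \<mu> = sets borel" and c: "0 < c" and cN: "c / 2 ^ N \<le> 1"
    and bnd: "AE x in \<mu>. x\<^sup>2 \<le> c" and M: "\<And>k. 1 \<le> M k"
    and sparse: "\<And>k. k < N \<Longrightarrow> exp 3 * (real n * measure \<mu> (dyadic_shell c k)) \<le> exp (-1) * real (M k)"
    and tail: "real n * (\<Sum>k<N. exp (- real (M k))) \<le> t"
    and R: "real n + (\<Sum>k<N. (real (M k) - 1) * (c / 2 ^ k)) \<le> R\<^sup>2" "0 \<le> R"
  shows "1 - exp (- t) \<le> measure (PiM ({..<n}\<times>{..<n}) (\<lambda>_. \<mu>))
    {A \<in> space (PiM ({..<n}\<times>{..<n}) (\<lambda>_. \<mu>)). \<exists>J\<subseteq>{..<n}. real (card J) \<le> t \<and>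
       norm_2inf n (col_restrict ({..<n} - J) A) \<le> R}"
proof -
  let ?I = "{..<n}\<times>{..<n}"
  let ?P = "PiM ?I (\<lambda>_. \<mu>)"
  interpret P: product_prob_space "\<lambda>_. \<mu>" ?I by (rule product_prob_space_const[OF \<mu>])
  define Good where "Good = {A \<in> space ?P. \<exists>J\<subseteq>{..<n}. real (card J) \<le> t \<and>
       norm_2inf n (col_restrict ({..<n} - J) A) \<le> R}"
  define U where "U = (\<Union>g\<in>heavy_patterns ({..<n}\<times>{..<N}) n (\<lambda>x. M (snd x)) t.
       space ?P \<inter> pattern_event n c N g)"
  have Good_sets: "Good \<in> sets ?P"
    unfolding Good_def by (rule column_removal_event_sets[OF sb])
  have U_sets: "U \<in> sets ?P"
    unfolding U_def using pattern_event_sets[OF sb] by (intro sets.finite_UN finite_heavy_patterns) auto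
  have sqrt_le: "sqrt (real n + (\<Sum>k<N. (real (M k) - 1) * (c / 2 ^ k))) \<le> R"
    using R real_sqrt_le_mono[OF R(1)] by simp
  have "AE A in ?P. \<forall>e\<in>?I. (A e)\<^sup>2 \<le> c"
    using \<mu> bnd by (intro AE_finite_allI AE_PiM_component) auto
  then have "AE A in ?P. A \<in> space ?P - Good \<longrightarrow> A \<in> U"
  proof eventually_elim
    fix A assume "\<forall>e\<in>?I. (A e)\<^sup>2 \<le> c"
    then have light_or_heavy: "(\<exists>J\<subseteq>{..<n}. real (card J) \<le> t \<and> norm_2inf n (col_restrict ({..<n} - J) A)
                 \<le> sqrt (real n + (\<Sum>k<N. (real (M k) - 1) * (c / 2 ^ k))))
        \<or> (\<exists>g\<in>heavy_patterns ({..<n}\<times>{..<N}) n (\<lambda>x. M (snd x)) t. A \<in> pattern_event n c N g)"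
      using c cN M by (intro bounded_matrix_light_or_heavy) auto
    show "A \<in> space ?P - Good \<longrightarrow> A \<in> U"
    proof
      assume A: "A \<in> space ?P - Good"
      from light_or_heavy show "A \<in> U"
      proof
        assume "\<exists>J\<subseteq>{..<n}. real (card J) \<le> t \<and> norm_2inf n (col_restrict ({..<n} - J) A)
                 \<le> sqrt (real n + (\<Sum>k<N. (real (M k) - 1) * (c / 2 ^ k)))"
        then have "A \<in> Good" using A sqrt_le unfolding Good_def by fastforce
        with A show ?thesis by simp
      qed (use A in \<open>auto simp: U_def\<close>)
    qed
  qed
  then have "measure ?P (space ?P - Good) \<le> measure ?P U"
    using U_sets by (rule P.finite_measure_mono_AE)
  moreover have "measure ?P U \<le> exp (- t)"
    unfolding U_def using M by (intro prob_heavy_pattern_events_le[OF \<mu> sb c _ sparse tail]) (simp add: Suc_le_eq)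
  ultimately show ?thesis
    using P.prob_compl[OF Good_sets] by (simp add: Good_def)
qed

lemma ln_2_ge_half: "1/2 \<le> ln (2::real)"
proof -
  have "exp (1/2::real) ^ 2 = exp 1" by (simp flip: exp_of_nat_mult)
  also have "\<dots> \<le> 2 ^ 2" using exp_le by simp
  finally have "exp (1/2::real) \<le> 2" by (rule power2_le_imp_le) simp
  then have "ln (exp (1/2)) \<le> ln (2::real)" by (subst ln_le_cancel_iff) auto
  then show ?thesis by simp
qed

lemma column_removal_thresholds_exist:
  fixes p :: "nat \<Rightarrow> real" and \<epsilon> :: real
  assumes p: "\<And>k. 0 \<le> p k" and sum_p: "(\<Sum>k<n. real n / 4 / 2 ^ Suc k * p k) \<le> 1"
    and \<epsilon>: "0 < \<epsilon>" "\<epsilon> \<le> 1/2"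
  obtains M :: "nat \<Rightarrow> nat" where "\<And>k. 1 \<le> M k"
    and "\<And>k. exp 3 * (real n * p k) \<le> exp (-1) * real (M k)"
    and "real n * (\<Sum>k<n. exp (- real (M k))) \<le> \<epsilon> * real n"
    and "real n + (\<Sum>k<n. (real (M k) - 1) * (real n / 4 / 2 ^ k)) \<le> 1000 * ln (1 / \<epsilon>) * real n"
proof -
  define L where "L = ln (1 / \<epsilon>)"
  define u where "u = 1000 * L - 1"
  have "ln 2 \<le> L"
    unfolding L_def using \<epsilon> by (subst ln_le_cancel_iff) (auto simp: field_simps)
  then have L: "1/2 \<le> L" using ln_2_ge_half by linarith
  have "exp 4 = exp (1::real) ^ 4" by (simp flip: exp_of_nat_mult)
  also have "\<dots> \<le> 3 ^ 4" using exp_le by (intro power_mono) auto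
  finally have u_large: "4 * exp 4 \<le> u" using L by (simp add: u_def)
  obtain M where M: "\<And>k. 1 \<le> M k" and M_geom: "\<And>k. u / 2 * (3/2) ^ k \<le> M k"
    and M_shell: "\<And>k. 2 * u * 2 ^ k * (real n / 4 / 2 ^ Suc k * p k) \<le> M k"
    and M_sum: "(\<Sum>k<n. (real (M k) - 1) / 2 ^ k) \<le> 4 * u"
    using dyadic_thresholds_exist[of "\<lambda>k. real n / 4 / 2 ^ Suc k * p k" n u] p sum_p L
    by (auto simp: u_def)
  show ?thesis
  proof (rule that[OF M])
    show "exp 3 * (real n * p k) \<le> exp (-1) * real (M k)" for k
    proof -
      have "exp 3 * (real n * p k) = exp (-1) * (4 * exp 4 * (real n * p k) / 4)"
        by (simp add: mult_ac flip: exp_add)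
      also have "\<dots> \<le> exp (-1) * (u * (real n * p k) / 4)"
        using u_large p by (intro mult_left_mono divide_right_mono mult_right_mono) auto
      also have "u * (real n * p k) / 4 = 2 * u * 2 ^ k * (real n / 4 / 2 ^ Suc k * p k)"
        by simp
      also have "exp (-1) * \<dots> \<le> exp (-1) * real (M k)"
        using M_shell by simp
      finally show ?thesis .
    qed
    have "(\<Sum>k<n. exp (- real (M k))) \<le> 2 * exp (- (u / 2))"
      using L M_geom by (intro sum_exp_neg_geometric_le) (auto simp: u_def)
    also have "\<dots> \<le> exp 1 * exp (- L - 1)"
    proof -
      have "L + 1 \<le> u / 2" unfolding u_def using L by (simp add: field_simps)
      then show ?thesis using exp_ge_add_one_self[of 1] by (intro mult_mono) auto
    qed
    also have "\<dots> = \<epsilon>"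
      using \<epsilon> by (simp add: L_def exp_minus flip: exp_add)
    finally show "real n * (\<Sum>k<n. exp (- real (M k))) \<le> \<epsilon> * real n"
      by (subst mult.commute) (rule mult_left_mono, simp_all)
    have "real n + (\<Sum>k<n. (real (M k) - 1) * (real n / 4 / 2 ^ k))
        = real n + real n / 4 * (\<Sum>k<n. (real (M k) - 1) / 2 ^ k)"
      by (simp add: sum_distrib_left mult.commute)
    also have "\<dots> \<le> real n + real n / 4 * (4 * u)"
      using M_sum by (intro add_left_mono mult_left_mono) auto
    also have "\<dots> = 1000 * ln (1 / \<epsilon>) * real n"
      by (simp add: u_def L_def algebra_simps)
    finally show "real n + (\<Sum>k<n. (real (M k) - 1) * (real n / 4 / 2 ^ k))
        \<le> 1000 * ln (1 / \<epsilon>) * real n" .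
  qed
qed

lemma prob_exists_small_column_removal:
  fixes \<mu> :: "real measure" and \<epsilon> :: real
  assumes \<mu>: "prob_space \<mu>" and sb: "sets \<mu> = sets borel" and second: "(\<integral>x. x\<^sup>2 \<partial>\<mu>) \<le> 1"
    and bnd: "AE x in \<mu>. \<bar>x\<bar> \<le> sqrt (real n) / 2" and \<epsilon>: "0 < \<epsilon>" "\<epsilon> \<le> 1/2"
  shows "1 - exp (- \<epsilon> * real n) \<le> measure (PiM ({..<n}\<times>{..<n}) (\<lambda>_. \<mu>))
    {A \<in> space (PiM ({..<n}\<times>{..<n}) (\<lambda>_. \<mu>)). \<exists>J\<subseteq>{..<n}. real (card J) \<le> \<epsilon> * real n \<and>
       norm_2inf n (col_restrict ({..<n} - J) A) \<le> sqrt 1000 * sqrt (ln (1 / \<epsilon>)) * sqrt (real n)}"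
proof (cases "n = 0")
  case False
  define c where "c = real n / 4"
  define p where "p k = measure \<mu> (dyadic_shell c k)" for k
  have c: "0 < c" using False by (simp add: c_def)
  have sq_bnd: "AE x in \<mu>. x\<^sup>2 \<le> c"
    using bnd
  proof eventually_elim
    fix x :: real assume "\<bar>x\<bar> \<le> sqrt (real n) / 2"
    then have "\<bar>x\<bar>\<^sup>2 \<le> (sqrt (real n) / 2)\<^sup>2" by (intro power_mono) auto
    then show "x\<^sup>2 \<le> c" by (simp add: c_def power_divide)
  qed
  have "integrable \<mu> (\<lambda>x. x\<^sup>2)"
    using sq_bnd sb
    by (intro finite_measure.integrable_const_bound[where B=c] prob_space.finite_measure[OF \<mu>]) auto
  then have "(\<Sum>k<n. real n / 4 / 2 ^ Suc k * p k) \<le> 1"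
    using order_trans[OF sum_dyadic_shell_measure_le_second_moment[OF \<mu> sb c] second]
    by (simp add: p_def c_def)
  then obtain M where M: "\<And>k. 1 \<le> M k"
    and sparse: "\<And>k. exp 3 * (real n * p k) \<le> exp (-1) * real (M k)"
    and tail: "real n * (\<Sum>k<n. exp (- real (M k))) \<le> \<epsilon> * real n"
    and rows: "real n + (\<Sum>k<n. (real (M k) - 1) * (real n / 4 / 2 ^ k)) \<le> 1000 * ln (1 / \<epsilon>) * real n"
    using column_removal_thresholds_exist[of p n \<epsilon>] \<epsilon> by (auto simp: p_def)
  have "real n \<le> 2 ^ n"
    using less_exp[of n] by (metis less_imp_le of_nat_le_iff of_nat_numeral of_nat_power)
  also have "\<dots> \<le> 4 * 2 ^ n" by simp
  finally have cN: "c / 2 ^ n \<le> 1" by (simp add: c_def)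
  have ln_nonneg: "0 \<le> ln (1 / \<epsilon>)" using \<epsilon> by simp
  then have "real n + (\<Sum>k<n. (real (M k) - 1) * (c / 2 ^ k))
      \<le> (sqrt 1000 * sqrt (ln (1 / \<epsilon>)) * sqrt (real n))\<^sup>2"
    using rows by (simp add: c_def power_mult_distrib)
  with ln_nonneg show ?thesis
    using prob_column_removal_ge[OF \<mu> sb c cN sq_bnd M sparse[unfolded p_def] tail] by simp
qed simp

text \<open>The hypothesis that the entries have mean zero is not needed.\<close>

theorem mainTheorem5:
  "\<exists>C::real. C > 0 \<and>
     (\<forall>(\<mu>::real measure) (n::nat) (\<epsilon>::real).
        prob_space \<mu> \<and> sets \<mu> = sets borel \<and>
        (\<integral>x. x \<partial>\<mu>) = 0 \<and> (\<integral>x. x\<^sup>2 \<partial>\<mu>) \<le> 1 \<and>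
        (AE x in \<mu>. \<bar>x\<bar> \<le> sqrt (real n) / 2) \<and>
        0 < \<epsilon> \<and> \<epsilon> \<le> 1/2
      \<longrightarrow>
        measure (PiM ({..<n} \<times> {..<n}) (\<lambda>_. \<mu>))
          {A \<in> space (PiM ({..<n} \<times> {..<n}) (\<lambda>_. \<mu>)).
             \<exists>J \<subseteq> {..<n}. real (card J) \<le> \<epsilon> * real n \<and>
               norm_2inf n (col_restrict ({..<n} - J) A)
                 \<le> C * sqrt (ln (1 / \<epsilon>)) * sqrt (real n)}
        \<ge> 1 - exp (- \<epsilon> * real n))"
  by (intro exI[of _ "sqrt 1000"] conjI allI impI prob_exists_small_column_removal) auto

end
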